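(* Let $c \ge 1$ be an integer, let $m = 5c$, and let $f(x) = x^{5c} + x^{3c} + x^{2c} + x^{c} + 1 \in \mathbb{F}_2[x]$. There is a fixed, input-independent straight-line program using no AND operations and exactly $12c - 1 = \frac{12}{5}m - 1$ two-input XOR operations which, on input the coefficient bits $d_0,\dots,d_{2m-2}$ of an arbitrary polynomial $D(x)=\sum_{i=0}^{2m-2} d_i x^i \in \mathbb{F}_2[x]$ of degree at most $2m-2$, outputs the $m$ coefficient bits of the remainder of $D$ upon division by $f$.
   Context: A straight-line program over $\mathbb{F}_2$ here is a sequence of gates, each computing the XOR (sum in $\mathbb{F}_2$) of two values that are either input bits or outputs of earlier gates; each output bit is an input bit or a gate output. The number of XOR operations is the number of gates. *)

theory Defs
  imports "HOL-Library.Z2" "HOL-Computational_Algebra.Polynomial"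
begin

text \<open>XOR straight-line programs over GF(2) (type bit).
  Wires 0..n-1 are the input bits; wire n+j is the output of gate j.
  A gate (a,b) computes the XOR (sum in GF(2)) of wires a and b.\<close>

type_synonym gate = "nat \<times> nat"

definition wire_val :: "nat \<Rightarrow> (nat \<Rightarrow> bit) \<Rightarrow> bit list \<Rightarrow> nat \<Rightarrow> bit" where
  "wire_val n x vs w = (if w < n then x w else vs ! (w - n))"

definition gate_vals :: "nat \<Rightarrow> (nat \<Rightarrow> bit) \<Rightarrow> gate list \<Rightarrow> bit list" where
  "gate_vals n x gs =
     fold (\<lambda>(a, b) vs. vs @ [wire_val n x vs a + wire_val n x vs b]) gs []"

definition valid_slp :: "nat \<Rightarrow> gate list \<Rightarrow> nat list \<Rightarrow> bool" where
  "valid_slp n gs outs \<longleftrightarrow>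
     (\<forall>j < length gs. fst (gs ! j) < n + j \<and> snd (gs ! j) < n + j) \<and>
     (\<forall>w \<in> set outs. w < n + length gs)"

definition slp_outputs :: "nat \<Rightarrow> gate list \<Rightarrow> nat list \<Rightarrow> (nat \<Rightarrow> bit) \<Rightarrow> bit list" where
  "slp_outputs n gs outs x = map (wire_val n x (gate_vals n x gs)) outs"

end

theory Submission
  imports Defs
begin

text \<open>Put \<open>y = x^c\<close>, so that \<open>f = y^5 + y^3 + y^2 + y + 1\<close>, and cut \<open>D\<close> into ten blocks of \<open>c\<close>
  coefficients, \<open>D = (\<Sum>j<10. B j * y^j)\<close> with \<open>degree (B j) < c\<close>. Reducing \<open>y^5, \<dots>, y^9\<close>
  modulo \<open>f\<close> turns \<open>D\<close> into \<open>\<Sum>q<5. R q * y^q\<close> with every \<open>R q\<close> a sum of some of the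
  blocks; as the \<open>R q\<close> still have degree \<open>< c\<close>, this is the remainder, and its coefficient
  \<open>q * c + p\<close> is the XOR of coefficient \<open>p\<close> of those blocks. For each position \<open>p\<close> the five
  sums share \<open>B 5 + B 6\<close> and \<open>B 7 + B 9\<close> and cost 12 XORs; at \<open>p = c - 1\<close> the block \<open>B 9\<close> has
  no coefficient (it would be \<open>d (10 * c - 1)\<close>), which saves one gate. One copy of this column
  circuit per position gives \<open>12 * c - 1\<close> gates.\<close>

definition block :: "(nat \<Rightarrow> 'a::comm_monoid_add) \<Rightarrow> nat \<Rightarrow> nat \<Rightarrow> 'a poly" where
  "block a c j = (\<Sum>p<c. monom (a (j * c + p)) p)"

lemma coeff_sum_monom:
  "coeff (\<Sum>k<N. monom (a k) k) n = (if n < N then a n else 0)"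
  by (simp add: coeff_sum coeff_monom)

lemma sum_monom_extend:
  "N \<le> M \<Longrightarrow> (\<Sum>k<N. monom (a k) k) = (\<Sum>k<M. monom (if k < N then a k else 0) k)"
  by (rule poly_eqI) (simp add: coeff_sum_monom)

lemma degree_sum_monom_less:
  assumes "N > 0"
  shows "degree (\<Sum>k<N. monom (a k) k) < N"
proof -
  have "degree (\<Sum>k<N. monom (a k) k) \<le> N - 1"
    by (rule degree_le) (auto simp: coeff_sum_monom)
  then show ?thesis using assms by linarith
qed

lemma sum_monom_eq_sum_blocks:
  fixes a :: "nat \<Rightarrow> 'a::comm_semiring_1"
  shows "(\<Sum>k<N * c. monom (a k) k) = (\<Sum>j<N. block a c j * monom 1 c ^ j)"
proof -
  have "(\<Sum>k<N * c. monom (a k) k) = (\<Sum>j<N. \<Sum>k\<in>{j*c..<j*c+c}. monom (a k) k)"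
    by (simp add: sum.nat_group)
  also have "\<dots> = (\<Sum>j<N. block a c j * monom 1 c ^ j)"
  proof (rule sum.cong[OF refl])
    fix j
    have "(\<Sum>k\<in>{j*c..<j*c+c}. monom (a k) k) = (\<Sum>p<c. monom (a (j*c+p)) (j*c+p))"
      using sum.shift_bounds_nat_ivl[of "\<lambda>k. monom (a k) k" 0 "j*c" c]
      by (simp add: lessThan_atLeast0 add.commute)
    also have "\<dots> = (\<Sum>p<c. monom (a (j*c+p)) p * monom 1 c ^ j)"
      by (simp add: monom_power mult_monom mult.commute add.commute)
    finally show "(\<Sum>k\<in>{j*c..<j*c+c}. monom (a k) k) = block a c j * monom 1 c ^ j"
      by (simp add: block_def sum_distrib_right)
  qed
  finally show ?thesis .
qed

text \<open>Modulo \<open>y\<^sup>5 + y\<^sup>3 + y\<^sup>2 + y + 1\<close> in characteristic 2 one has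
  \<open>y\<^sup>5 \<equiv> y\<^sup>3 + y\<^sup>2 + y + 1\<close>, \<open>y\<^sup>6 \<equiv> y\<^sup>4 + y\<^sup>3 + y\<^sup>2 + y\<close>, \<open>y\<^sup>7 \<equiv> y\<^sup>4 + y + 1\<close>,
  \<open>y\<^sup>8 \<equiv> y\<^sup>3 + 1\<close> and \<open>y\<^sup>9 \<equiv> y\<^sup>4 + y\<close>; entry \<open>q\<close> collects the coefficient of \<open>y\<^sup>q\<close>.\<close>
definition reduced_blocks :: "(nat \<Rightarrow> 'a::plus) \<Rightarrow> 'a list" where
  "reduced_blocks b =
     [b 0 + b 5 + b 7 + b 8, b 1 + b 5 + b 6 + b 7 + b 9, b 2 + b 5 + b 6,
      b 3 + b 5 + b 6 + b 8, b 4 + b 6 + b 7 + b 9]"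

lemma reduced_blocks_cong:
  "(\<And>j. j < 10 \<Longrightarrow> b j = b' j) \<Longrightarrow> reduced_blocks b = reduced_blocks b'"
  by (simp add: reduced_blocks_def)

lemma sum_powers_reduced:
  fixes b :: "nat \<Rightarrow> 'a::comm_ring_1" and y :: 'a
  assumes char2: "(2::'a) = 0"
  shows "(\<Sum>j<10. b j * y ^ j) = (\<Sum>q<5. reduced_blocks b ! q * y ^ q)
     + (y^5 + y^3 + y^2 + y + 1)
       * (b 5 + b 6 * y + b 7 * (y^2 + 1) + b 8 * (y^3 + y + 1) + b 9 * (y^4 + y^2 + y))"
proof -
  have "(\<Sum>q<5. reduced_blocks b ! q * y ^ q)
     + (y^5 + y^3 + y^2 + y + 1)
       * (b 5 + b 6 * y + b 7 * (y^2 + 1) + b 8 * (y^3 + y + 1) + b 9 * (y^4 + y^2 + y))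
    = (\<Sum>j<10. b j * y ^ j) + 2 * (b 5 * (1 + y + y^2 + y^3) + b 6 * (y + y^2 + y^3 + y^4)
       + b 7 * (1 + y + y^2 + y^3 + y^4 + y^5) + b 8 * (1 + y + y^2 + 2 * y^3 + y^4 + y^5 + y^6)
       + b 9 * (y + y^2 + y^3 + 2 * y^4 + y^5 + y^6 + y^7))"
    by (simp add: reduced_blocks_def eval_nat_numeral algebra_simps)
  then show ?thesis using char2 by simp
qed

lemma block_of_reduced_blocks:
  assumes "q < 5"
  shows "block (\<lambda>i. reduced_blocks (\<lambda>j. a (j * c + i mod c)) ! (i div c)) c q
         = reduced_blocks (block a c) ! q"
proof -
  have "block (\<lambda>i. reduced_blocks (\<lambda>j. a (j * c + i mod c)) ! (i div c)) c q
        = (\<Sum>p<c. monom (reduced_blocks (\<lambda>j. a (j * c + p)) ! q) p)"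
    unfolding block_def by (rule sum.cong) auto
  also have "\<dots> = reduced_blocks (block a c) ! q"
    using assms unfolding block_def reduced_blocks_def
    by (auto simp: less_Suc_eq numeral_eq_Suc sum.distrib add_monom[symmetric])
  finally show ?thesis .
qed

lemma sum_monom_mod:
  fixes a :: "nat \<Rightarrow> 'a::field" and c :: nat
  assumes char2: "(2::'a) = 0" and "c \<ge> 1"
  defines "f \<equiv> monom 1 (5*c) + monom 1 (3*c) + monom 1 (2*c) + monom 1 c + 1"
  shows "(\<Sum>k<10*c. monom (a k) k) mod f
         = (\<Sum>i<5*c. monom (reduced_blocks (\<lambda>j. a (j * c + i mod c)) ! (i div c)) i)"
    (is "?D mod f = ?R")
proof -
  define y where "y = monom (1::'a) c"
  have f: "f = y^5 + y^3 + y^2 + y + 1"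
    by (simp add: f_def y_def monom_power mult.commute[of c])
  have R: "?R = (\<Sum>q<5. reduced_blocks (block a c) ! q * y ^ q)"
    unfolding y_def sum_monom_eq_sum_blocks by (intro sum.cong refl) (simp add: block_of_reduced_blocks)
  have "?D = (\<Sum>j<10. block a c j * y ^ j)"
    unfolding y_def by (rule sum_monom_eq_sum_blocks)
  then obtain Q where D: "?D = ?R + f * Q"
    unfolding R f using char2 by (subst (asm) sum_powers_reduced) (auto simp: numeral_poly)
  have "degree ?R < 5 * c"
    using assms(2) by (intro degree_sum_monom_less) simp
  also have "5 * c = degree f"
  proof (rule antisym)
    show "5 * c \<le> degree f" using assms(2) by (intro le_degree) (simp add: f_def coeff_monom)
    show "degree f \<le> 5 * c" by (rule degree_le) (auto simp: f_def coeff_monom)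
  qed
  finally show ?thesis
    unfolding D by (simp add: mod_poly_less)
qed

definition slp_wire :: "nat \<Rightarrow> gate list \<Rightarrow> (nat \<Rightarrow> bit) \<Rightarrow> nat \<Rightarrow> bit" where
  "slp_wire n gs x = wire_val n x (gate_vals n x gs)"

lemma nth_slp_outputs: "q < length outs \<Longrightarrow> slp_outputs n gs outs x ! q = slp_wire n gs x (outs ! q)"
  by (simp add: slp_outputs_def slp_wire_def)

lemma slp_wire_input: "w < n \<Longrightarrow> slp_wire n gs x w = x w"
  by (simp add: slp_wire_def wire_val_def)

lemma gate_vals_snoc:
  "gate_vals n x (gs @ [(a, b)]) =
     gate_vals n x gs @ [wire_val n x (gate_vals n x gs) a + wire_val n x (gate_vals n x gs) b]"
  by (simp add: gate_vals_def)

lemma length_gate_vals [simp]: "length (gate_vals n x gs) = length gs"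
  by (induction gs rule: rev_induct) (auto simp: gate_vals_snoc, simp add: gate_vals_def)

lemma wire_val_append: "w < n + length vs \<Longrightarrow> wire_val n x (vs @ ws) w = wire_val n x vs w"
  by (auto simp: wire_val_def nth_append)

lemma slp_wire_append:
  assumes "w < n + length gs"
  shows "slp_wire n (gs @ hs) x w = slp_wire n gs x w"
  using assms
proof (induction hs rule: rev_induct)
  case Nil then show ?case by simp
next
  case (snoc h hs)
  then show ?case
    by (cases h) (simp add: slp_wire_def gate_vals_snoc wire_val_append flip: append_assoc)
qed

lemma gate_vals_cong:
  assumes "\<And>i. i < n \<Longrightarrow> x i = x' i"
  shows "gate_vals n x gs = gate_vals n x' gs"
proof (induction gs rule: rev_induct)
  case Nil then show ?case by (simp add: gate_vals_def)
next
  case (snoc g gs)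
  have "wire_val n x vs w = wire_val n x' vs w" for vs w
    using assms by (simp add: wire_val_def)
  with snoc show ?case by (cases g) (simp add: gate_vals_snoc)
qed

lemma slp_wire_cong:
  "(\<And>i. i < n \<Longrightarrow> x i = x' i) \<Longrightarrow> slp_wire n gs x w = slp_wire n gs x' w"
  by (simp add: slp_wire_def wire_val_def gate_vals_cong[of n x x'])

definition relocate_wire :: "nat \<Rightarrow> (nat \<Rightarrow> nat) \<Rightarrow> nat \<Rightarrow> nat \<Rightarrow> nat" where
  "relocate_wire k \<sigma> base w = (if w < k then \<sigma> w else base + (w - k))"

definition append_copy :: "nat \<Rightarrow> gate list \<Rightarrow> nat \<Rightarrow> (nat \<Rightarrow> nat) \<Rightarrow> gate list \<Rightarrow> gate list" where
  "append_copy n gs k \<sigma> t =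
     gs @ map (map_prod (relocate_wire k \<sigma> (n + length gs)) (relocate_wire k \<sigma> (n + length gs))) t"

lemma length_append_copy [simp]: "length (append_copy n gs k \<sigma> t) = length gs + length t"
  by (simp add: append_copy_def)

lemma relocate_wire_less:
  assumes "w < k + m" "\<forall>i<k. \<sigma> i < base"
  shows "relocate_wire k \<sigma> base w < base + m"
  using assms by (auto simp: relocate_wire_def)

lemma wire_val_relocate_wire:
  assumes "base = n + length vs" and "\<forall>i<k. \<sigma> i < base" and "w < k + length ws"
  shows "wire_val n x (vs @ ws) (relocate_wire k \<sigma> base w)
         = wire_val k (\<lambda>i. wire_val n x vs (\<sigma> i)) ws w"
  using assms by (auto simp: relocate_wire_def wire_val_def nth_append)

lemma valid_slp_drop_outputs: "valid_slp n gs outs \<Longrightarrow> valid_slp n gs []"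
  by (simp add: valid_slp_def)

lemma valid_slp_snoc:
  "valid_slp k (t @ [(a, b)]) [] \<longleftrightarrow> valid_slp k t [] \<and> a < k + length t \<and> b < k + length t"
  by (auto simp: valid_slp_def nth_append less_Suc_eq)

lemma gate_vals_append_copy:
  assumes "valid_slp k t []" and "\<forall>i<k. \<sigma> i < n + length gs"
  shows "gate_vals n x (append_copy n gs k \<sigma> t)
         = gate_vals n x gs @ gate_vals k (\<lambda>i. slp_wire n gs x (\<sigma> i)) t"
  using assms(1)
proof (induction t rule: rev_induct)
  case Nil then show ?case by (simp add: append_copy_def gate_vals_def)
next
  case (snoc g t)
  obtain a b where g: "g = (a, b)" by (cases g)
  have "valid_slp k t []" and "a < k + length t" "b < k + length t"
    using snoc.prems by (simp_all add: g valid_slp_snoc)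
  with snoc.IH show ?case
    using assms(2) unfolding append_copy_def slp_wire_def g
    by (simp add: gate_vals_snoc wire_val_relocate_wire flip: append_assoc)
qed

lemma slp_wire_append_copy:
  assumes "valid_slp k t []" and "\<forall>i<k. \<sigma> i < n + length gs" and "w < k + length t"
  shows "slp_wire n (append_copy n gs k \<sigma> t) x (relocate_wire k \<sigma> (n + length gs) w)
         = slp_wire k t (\<lambda>i. slp_wire n gs x (\<sigma> i)) w"
  using assms by (simp add: gate_vals_append_copy wire_val_relocate_wire slp_wire_def)

lemma valid_slp_append_copy:
  assumes "valid_slp n gs []" and "valid_slp k t []" and "\<forall>i<k. \<sigma> i < n + length gs"
  shows "valid_slp n (append_copy n gs k \<sigma> t) []"
  unfolding valid_slp_def
proof (rule conjI, intro allI impI)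
  fix j assume j: "j < length (append_copy n gs k \<sigma> t)"
  show "fst (append_copy n gs k \<sigma> t ! j) < n + j \<and> snd (append_copy n gs k \<sigma> t ! j) < n + j"
  proof (cases "j < length gs")
    case True
    then show ?thesis using assms(1) by (simp add: append_copy_def valid_slp_def nth_append)
  next
    case False
    then obtain i where i: "j = length gs + i" "i < length t"
      using j by (metis add_less_cancel_left le_add_diff_inverse length_append_copy not_less)
    have "fst (t ! i) < k + i" "snd (t ! i) < k + i"
      using assms(2) i by (auto simp: valid_slp_def)
    then show ?thesis
      using i relocate_wire_less[OF _ assms(3)] by (simp add: append_copy_def nth_append add.assoc)
  qed
qed simp

primrec copies :: "nat \<Rightarrow> nat \<Rightarrow> (nat \<Rightarrow> nat \<Rightarrow> nat) \<Rightarrow> gate list \<Rightarrow> nat \<Rightarrow> gate list" where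
  "copies n k \<sigma> t 0 = []"
| "copies n k \<sigma> t (Suc p) = append_copy n (copies n k \<sigma> t p) k (\<sigma> p) t"

lemma length_copies [simp]: "length (copies n k \<sigma> t N) = length t * N"
  by (induction N) simp_all

lemma valid_slp_copies:
  assumes "valid_slp k t []" and "\<forall>p<N. \<forall>i<k. \<sigma> p i < n"
  shows "valid_slp n (copies n k \<sigma> t N) []"
  using assms(2)
proof (induction N)
  case 0 then show ?case by (simp add: valid_slp_def)
next
  case (Suc N)
  then show ?case
    using assms(1) by (auto intro!: valid_slp_append_copy simp: less_Suc_eq trans_less_add1)
qed

lemma slp_wire_copies:
  assumes "valid_slp k t []" and "\<forall>p<N. \<forall>i<k. \<sigma> p i < n" and "p < N" and "w < k + length t"
  shows "slp_wire n (copies n k \<sigma> t N) x (relocate_wire k (\<sigma> p) (n + length t * p) w)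
         = slp_wire k t (\<lambda>i. x (\<sigma> p i)) w"
  using assms(2,3)
proof (induction N)
  case 0 then show ?case by simp
next
  case (Suc N)
  show ?case
  proof (cases "p < N")
    case True
    have "relocate_wire k (\<sigma> p) (n + length t * p) w < n + length t * p + length t"
      using Suc.prems True assms(4) by (intro relocate_wire_less) (auto intro: trans_less_add1)
    also have "\<dots> = n + length t * Suc p"
      by simp
    also have "\<dots> \<le> n + length (copies n k \<sigma> t N)"
      using True by (simp add: mult_le_mono2 Suc_leI del: mult_Suc_right)
    finally show ?thesis
      using Suc True by (simp add: append_copy_def slp_wire_append)
  next
    case False
    then have "p = N" using Suc.prems(2) by simp
    have inputs: "\<forall>i<k. \<sigma> N i < n"
      using Suc.prems(1) by simp
    have "slp_wire n (copies n k \<sigma> t (Suc N)) x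
            (relocate_wire k (\<sigma> N) (n + length (copies n k \<sigma> t N)) w)
          = slp_wire k t (\<lambda>i. slp_wire n (copies n k \<sigma> t N) x (\<sigma> N i)) w"
      unfolding copies.simps using assms(1,4) inputs
      by (intro slp_wire_append_copy) (auto intro: trans_less_add1)
    also have "\<dots> = slp_wire k t (\<lambda>i. x (\<sigma> N i)) w"
      using inputs by (intro slp_wire_cong) (simp add: slp_wire_input)
    finally show ?thesis
      using \<open>p = N\<close> by simp
  qed
qed

text \<open>Wire \<open>j < 10\<close> carries coefficient \<open>p\<close> of block \<open>B j\<close>; wires 10 (\<open>B 5 + B 6\<close>) and 14
  (\<open>B 7 + B 9\<close>) are shared between the outputs.\<close>
definition column_slp :: "gate list" where
  "column_slp = [(5, 6), (2, 10), (3, 10), (12, 8), (7, 9), (1, 10), (15, 14), (4, 6), (17, 14),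
               (0, 5), (19, 7), (20, 8)]"

definition column_outputs :: "nat list" where
  "column_outputs = [21, 16, 11, 13, 18]"

definition last_column_slp :: "gate list" where
  "last_column_slp = [(5, 6), (2, 9), (3, 9), (11, 8), (1, 9), (13, 7), (4, 6), (15, 7),
                     (0, 5), (17, 7), (18, 8)]"

definition last_column_outputs :: "nat list" where
  "last_column_outputs = [19, 14, 10, 12, 16]"

lemma length_column_slp [simp]: "length column_slp = 12"
  by (simp add: column_slp_def)

lemma length_column_outputs [simp]: "length column_outputs = 5"
  by (simp add: column_outputs_def)

lemma length_last_column_slp [simp]: "length last_column_slp = 11"
  by (simp add: last_column_slp_def)

lemma length_last_column_outputs [simp]: "length last_column_outputs = 5"
  by (simp add: last_column_outputs_def)

lemma valid_column_slp: "valid_slp 10 column_slp column_outputs"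
  by (simp add: valid_slp_def column_slp_def column_outputs_def All_less_Suc2 eval_nat_numeral)

lemma valid_last_column_slp: "valid_slp 9 last_column_slp last_column_outputs"
  by (simp add: valid_slp_def last_column_slp_def last_column_outputs_def All_less_Suc2 eval_nat_numeral)

lemma slp_outputs_column_slp: "slp_outputs 10 column_slp column_outputs y = reduced_blocks y"
  by (simp add: slp_outputs_def gate_vals_def wire_val_def column_slp_def column_outputs_def
      reduced_blocks_def add.assoc del: add_bit_eq_xor)

lemma slp_outputs_last_column_slp:
  "slp_outputs 9 last_column_slp last_column_outputs y = reduced_blocks (y(9 := 0))"
  by (simp add: slp_outputs_def gate_vals_def wire_val_def last_column_slp_def last_column_outputs_def
      reduced_blocks_def add.assoc del: add_bit_eq_xor)

definition reduction_slp :: "nat \<Rightarrow> gate list" where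
  "reduction_slp c =
     append_copy (10 * c - 1) (copies (10 * c - 1) 10 (\<lambda>p j. j * c + p) column_slp (c - 1))
       9 (\<lambda>j. j * c + (c - 1)) last_column_slp"

definition reduction_outputs :: "nat \<Rightarrow> nat list" where
  "reduction_outputs c = map (\<lambda>i.
     if i mod c < c - 1
     then relocate_wire 10 (\<lambda>j. j * c + i mod c) (10 * c - 1 + 12 * (i mod c)) (column_outputs ! (i div c))
     else relocate_wire 9 (\<lambda>j. j * c + (c - 1)) (10 * c - 1 + 12 * (c - 1)) (last_column_outputs ! (i div c)))
     [0..<5 * c]"

lemma length_reduction_slp: "c \<ge> 1 \<Longrightarrow> length (reduction_slp c) = 12 * c - 1"
  by (simp add: reduction_slp_def)

lemma length_reduction_outputs [simp]: "length (reduction_outputs c) = 5 * c"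
  by (simp add: reduction_outputs_def)

lemma block_input_less:
  fixes j c :: nat
  assumes "j < 10" and "p < c - 1"
  shows "j * c + p < 10 * c - 1"
proof -
  have "j * c \<le> 9 * c" using assms(1) by simp
  then show ?thesis using assms(2) by linarith
qed

lemma last_block_input_less:
  fixes j c :: nat
  assumes "c \<ge> 1" and "j < 9"
  shows "j * c + (c - 1) < 10 * c - 1"
proof -
  have "j * c \<le> 8 * c" using assms by simp
  then show ?thesis using assms by (cases c) auto
qed

lemma column_output_wire_less:
  assumes "p < c - 1" and "q < 5"
  shows "relocate_wire 10 (\<lambda>j. j * c + p) (10 * c - 1 + 12 * p) (column_outputs ! q)
         < 10 * c - 1 + 12 * (c - 1)"
proof -
  have inputs: "j * c + p < 10 * c - 1 + 12 * p" if "j < 10" for j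
    using block_input_less[OF that assms(1)] by linarith
  have "column_outputs ! q < 10 + length column_slp"
    using valid_column_slp nth_mem[of q column_outputs] assms(2)
    by (auto simp: valid_slp_def length_column_outputs)
  then have "relocate_wire 10 (\<lambda>j. j * c + p) (10 * c - 1 + 12 * p) (column_outputs ! q)
             < 10 * c - 1 + 12 * p + 12"
    using inputs by (intro relocate_wire_less) auto
  then show ?thesis using assms(1) by linarith
qed

lemma slp_wire_reduction_slp_column:
  assumes "p < c - 1" and "q < 5"
  shows "slp_wire (10 * c - 1) (reduction_slp c) x
           (relocate_wire 10 (\<lambda>j. j * c + p) (10 * c - 1 + 12 * p) (column_outputs ! q))
         = reduced_blocks (\<lambda>j. x (j * c + p)) ! q"
proof -
  have inputs: "\<forall>p'<c - 1. \<forall>j<10. j * c + p' < 10 * c - 1"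
    using block_input_less by blast
  have "slp_wire (10 * c - 1) (reduction_slp c) x
          (relocate_wire 10 (\<lambda>j. j * c + p) (10 * c - 1 + 12 * p) (column_outputs ! q))
        = slp_wire (10 * c - 1) (copies (10 * c - 1) 10 (\<lambda>p j. j * c + p) column_slp (c - 1)) x
          (relocate_wire 10 (\<lambda>j. j * c + p) (10 * c - 1 + 12 * p) (column_outputs ! q))"
    unfolding reduction_slp_def append_copy_def
    using column_output_wire_less[OF assms]
    by (intro slp_wire_append) (simp only: length_copies length_column_slp)
  also have "\<dots> = slp_wire 10 column_slp (\<lambda>j. x (j * c + p)) (column_outputs ! q)"
    using slp_wire_copies[of 10 column_slp "c - 1" "\<lambda>p j. j * c + p" "10 * c - 1" p "column_outputs ! q" x]
      valid_column_slp inputs assms nth_mem[of q column_outputs]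
    by (auto simp: valid_slp_def)
  also have "\<dots> = reduced_blocks (\<lambda>j. x (j * c + p)) ! q"
    using assms(2) by (simp flip: nth_slp_outputs add: slp_outputs_column_slp)
  finally show ?thesis .
qed

lemma last_column_output_wire_less:
  assumes "c \<ge> 1" and "q < 5"
  shows "relocate_wire 9 (\<lambda>j. j * c + (c - 1)) (10 * c - 1 + 12 * (c - 1)) (last_column_outputs ! q)
         < 10 * c - 1 + (12 * c - 1)"
proof -
  have inputs: "j * c + (c - 1) < 10 * c - 1 + 12 * (c - 1)" if "j < 9" for j
    using last_block_input_less[OF assms(1) that] by linarith
  have "last_column_outputs ! q < 9 + length last_column_slp"
    using valid_last_column_slp nth_mem[of q last_column_outputs] assms(2)
    by (auto simp: valid_slp_def)
  then have "relocate_wire 9 (\<lambda>j. j * c + (c - 1)) (10 * c - 1 + 12 * (c - 1)) (last_column_outputs ! q)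
             < 10 * c - 1 + 12 * (c - 1) + 11"
    using inputs by (intro relocate_wire_less) auto
  then show ?thesis using assms(1) by linarith
qed

lemma slp_wire_reduction_slp_last_column:
  assumes "c \<ge> 1" and "q < 5"
  shows "slp_wire (10 * c - 1) (reduction_slp c) x
           (relocate_wire 9 (\<lambda>j. j * c + (c - 1)) (10 * c - 1 + 12 * (c - 1)) (last_column_outputs ! q))
         = reduced_blocks ((\<lambda>j. x (j * c + (c - 1)))(9 := 0)) ! q"
proof -
  let ?gs = "copies (10 * c - 1) 10 (\<lambda>p j. j * c + p) column_slp (c - 1)"
  have inputs: "\<forall>j<9. j * c + (c - 1) < 10 * c - 1"
    using last_block_input_less[OF assms(1)] by blast
  have "slp_wire (10 * c - 1) (reduction_slp c) x
          (relocate_wire 9 (\<lambda>j. j * c + (c - 1)) (10 * c - 1 + length ?gs) (last_column_outputs ! q))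
        = slp_wire 9 last_column_slp (\<lambda>j. slp_wire (10 * c - 1) ?gs x (j * c + (c - 1))) (last_column_outputs ! q)"
    unfolding reduction_slp_def using valid_last_column_slp inputs assms(2) nth_mem[of q last_column_outputs]
    by (intro slp_wire_append_copy) (auto simp: valid_slp_def intro: trans_less_add1)
  also have "\<dots> = slp_wire 9 last_column_slp (\<lambda>j. x (j * c + (c - 1))) (last_column_outputs ! q)"
    using inputs by (intro slp_wire_cong) (simp add: slp_wire_input)
  also have "\<dots> = reduced_blocks ((\<lambda>j. x (j * c + (c - 1)))(9 := 0)) ! q"
    using assms(2) by (simp flip: nth_slp_outputs add: slp_outputs_last_column_slp)
  finally show ?thesis by simp
qed

lemma valid_reduction_slp:
  assumes "c \<ge> 1"
  shows "valid_slp (10 * c - 1) (reduction_slp c) (reduction_outputs c)"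
proof -
  let ?gs = "copies (10 * c - 1) 10 (\<lambda>p j. j * c + p) column_slp (c - 1)"
  have inputs10: "\<forall>p<c - 1. \<forall>j<10. j * c + p < 10 * c - 1"
    using block_input_less by blast
  have inputs9: "\<forall>j<9. j * c + (c - 1) < 10 * c - 1 + length ?gs"
    using last_block_input_less[OF assms] by (meson trans_less_add1)
  have gates: "valid_slp (10 * c - 1) (reduction_slp c) []"
    unfolding reduction_slp_def
    using valid_slp_drop_outputs[OF valid_column_slp] valid_slp_drop_outputs[OF valid_last_column_slp] inputs10 inputs9
    by (intro valid_slp_append_copy valid_slp_copies)
  have "w < 10 * c - 1 + length (reduction_slp c)" if "w \<in> set (reduction_outputs c)" for w
  proof -
    obtain i where i: "i < 5 * c" and w: "w = reduction_outputs c ! i"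
      using \<open>w \<in> set (reduction_outputs c)\<close> by (auto simp: reduction_outputs_def)
    have "i div c < 5" using i by (simp add: less_mult_imp_div_less)
    then show ?thesis
      using i column_output_wire_less[of "i mod c" c "i div c"] last_column_output_wire_less[OF assms]
      by (auto simp: w reduction_outputs_def length_reduction_slp[OF assms])
  qed
  with gates show ?thesis by (simp add: valid_slp_def)
qed

lemma slp_outputs_reduction_slp:
  assumes "c \<ge> 1" and "i < 5 * c"
  shows "slp_outputs (10 * c - 1) (reduction_slp c) (reduction_outputs c) x ! i
         = reduced_blocks (\<lambda>j. if j * c + i mod c < 10 * c - 1 then x (j * c + i mod c) else 0) ! (i div c)"
proof -
  define p q where "p = i mod c" and "q = i div c"
  have q: "q < 5" using assms(2) by (simp add: q_def less_mult_imp_div_less)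
  have p: "p < c" using assms(1) by (simp add: p_def)
  have out: "slp_outputs (10 * c - 1) (reduction_slp c) (reduction_outputs c) x ! i
             = slp_wire (10 * c - 1) (reduction_slp c) x (reduction_outputs c ! i)"
    using assms(2) by (simp add: nth_slp_outputs reduction_outputs_def)
  show ?thesis
  proof (cases "p < c - 1")
    case True
    have wire: "reduction_outputs c ! i
          = relocate_wire 10 (\<lambda>j. j * c + p) (10 * c - 1 + 12 * p) (column_outputs ! q)"
      using assms(2) True by (simp add: reduction_outputs_def p_def q_def)
    show ?thesis
      unfolding out wire slp_wire_reduction_slp_column[OF True q] p_def[symmetric] q_def[symmetric]
      using True block_input_less
      by (intro arg_cong[where f = "\<lambda>l. l ! q"] reduced_blocks_cong) simp
  next
    case False
    then have last: "p = c - 1" using p by simp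
    have wire: "reduction_outputs c ! i
          = relocate_wire 9 (\<lambda>j. j * c + (c - 1)) (10 * c - 1 + 12 * (c - 1)) (last_column_outputs ! q)"
      using assms(2) False by (simp add: reduction_outputs_def p_def q_def)
    show ?thesis
      unfolding out wire slp_wire_reduction_slp_last_column[OF assms(1) q]
        p_def[symmetric] q_def[symmetric] last
      using assms(1) last_block_input_less[OF assms(1)]
      by (intro arg_cong[where f = "\<lambda>l. l ! q"] reduced_blocks_cong) (auto simp: less_Suc_eq)
  qed
qed

theorem mainTheorem3:
  fixes c :: nat
  assumes "c \<ge> 1"
  defines "m \<equiv> 5 * c"
  defines "f \<equiv> (monom 1 (5*c) + monom 1 (3*c) + monom 1 (2*c) + monom 1 c + 1 :: bit poly)"
  shows "\<exists>gs outs. valid_slp (2*m - 1) gs outs \<and> length gs = 12 * c - 1 \<and> length outs = m \<and>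
           (\<forall>d :: nat \<Rightarrow> bit. \<forall>i < m.
              slp_outputs (2*m - 1) gs outs d ! i = coeff ((\<Sum>k < 2*m - 1. monom (d k) k) mod f) i)"
proof (intro exI conjI allI impI)
  have n: "2 * m - 1 = 10 * c - 1" by (simp add: m_def)
  show "valid_slp (2 * m - 1) (reduction_slp c) (reduction_outputs c)"
    unfolding n using assms(1) by (rule valid_reduction_slp)
  show "length (reduction_slp c) = 12 * c - 1"
    using assms(1) by (rule length_reduction_slp)
  show "length (reduction_outputs c) = m"
    by (simp add: m_def)
  fix d :: "nat \<Rightarrow> bit" and i assume "i < m"
  then have i: "i < 5 * c" by (simp add: m_def)
  let ?d = "\<lambda>k. if k < 10 * c - 1 then d k else 0"
  have "(\<Sum>k < 2*m - 1. monom (d k) k) = (\<Sum>k < 10 * c. monom (?d k) k)"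
    unfolding n by (rule sum_monom_extend) simp
  then have "coeff ((\<Sum>k < 2*m - 1. monom (d k) k) mod f) i
             = reduced_blocks (\<lambda>j. ?d (j * c + i mod c)) ! (i div c)"
    using assms(1) i by (simp add: f_def sum_monom_mod[OF bit_2_eq_0] coeff_sum_monom)
  then show "slp_outputs (2 * m - 1) (reduction_slp c) (reduction_outputs c) d ! i
             = coeff ((\<Sum>k < 2*m - 1. monom (d k) k) mod f) i"
    unfolding n using slp_outputs_reduction_slp[OF assms(1) i] by simp
qed

end
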